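(* For every $\boldsymbol{\Delta}^0_2$ set $A\subseteq2^\omega$ there is a set $B\subseteq2^\omega$ with $B\equiv_W A$ such that $B$ is dualistic and $B=\Phi(C)=\Phi(U)$ for some closed set $C$ and some open set $U$.
   Context: $2^\omega$ is the Cantor space; $N_s=\{x:s\subset x\}$; $\mu$ the coin-tossing measure with $\mu(N_s)=2^{-\mathrm{lh}(s)}$. For measurable $A$ and $x\in2^\omega$, the density of $x$ in $A$ is $\mathcal D_A(x)=\lim_n\mu(A\cap N_{x\restriction n})/\mu(N_{x\restriction n})$ when the limit exists; $\Phi(A)=\{x:\mathcal D_A(x)=1\}$. A measurable set $B$ is dualistic if for every $x\in2^\omega$, $\mathcal D_B(x)$ exists and equals $0$ or $1$. $\boldsymbol{\Delta}^0_2$: sets both $F_\sigma$ and $G_\delta$. $X\equiv_W Y$ iff each is the preimage of the other under some continuous map $2^\omega\to2^\omega$. *)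

theory Defs
  imports "HOL-Probability.Probability"
begin

text \<open>Cantor space is modelled by the type nat \<Rightarrow> bool with the product
  (Tychonoff) topology of discrete bool.\<close>

type_synonym cantor = "nat \<Rightarrow> bool"

definition Nbhd :: "bool list \<Rightarrow> cantor set" where
  "Nbhd s = {x. \<forall>i < length s. x i = s ! i}"

definition restr :: "cantor \<Rightarrow> nat \<Rightarrow> bool list" where
  "restr x n = map x [0..<n]"

text \<open>Coin-tossing measure (completed, so that "measurable" means
  measurable with respect to the completion).\<close>
definition mu :: "cantor measure" where
  "mu = completion (Pi\<^sub>M UNIV (\<lambda>_. measure_pmf (bernoulli_pmf (1/2))))"

definition density_seq :: "cantor set \<Rightarrow> cantor \<Rightarrow> nat \<Rightarrow> real" where
  "density_seq A x n = measure mu (A \<inter> Nbhd (restr x n)) / measure mu (Nbhd (restr x n))"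

definition has_density :: "cantor set \<Rightarrow> cantor \<Rightarrow> real \<Rightarrow> bool" where
  "has_density A x d \<longleftrightarrow> density_seq A x \<longlonglongrightarrow> d"

definition Phi :: "cantor set \<Rightarrow> cantor set" where
  "Phi A = {x. has_density A x 1}"

definition dualistic :: "cantor set \<Rightarrow> bool" where
  "dualistic B \<longleftrightarrow> B \<in> sets mu \<and> (\<forall>x. has_density B x 0 \<or> has_density B x 1)"

definition Delta02 :: "cantor set \<Rightarrow> bool" where
  "Delta02 A \<longleftrightarrow> fsigma_in euclidean A \<and> gdelta_in euclidean A"

definition wadge_le :: "cantor set \<Rightarrow> cantor set \<Rightarrow> bool" where
  "wadge_le X Y \<longleftrightarrow> (\<exists>f :: cantor \<Rightarrow> cantor. continuous_on UNIV f \<and> X = f -` Y)"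

definition wadge_eq :: "cantor set \<Rightarrow> cantor set \<Rightarrow> bool" where
  "wadge_eq X Y \<longleftrightarrow> wadge_le X Y \<and> wadge_le Y X"

end

theory Submission
  imports Defs
begin

text \<open>
  The proof codes A into a set B = g -` A for a continuous g.  Points of the
  closed null set K of sequences vanishing off the perfect squares are decoded
  exactly (g z reads z at the squares), so A reduces to B by the embedding onto
  the squares.  Outside K, g is locally constant: the first 1 at a non-square
  position freezes a finite prefix of the decoded sequence, and g picks a point
  chosen from the neighbourhood of that prefix.  These points are chosen by a
  selector which, along the prefixes of any x, eventually lands in A exactly
  when x does; such selectors exist for Delta-0-2 sets (a limit lemma).

  Consequently B is locally constant off K, which makes B - K open and B \<union> K
  closed and gives densities 0 or 1 off K.  At a point of K, all but a
  vanishing proportion of each basic neighbourhood consists of points coded by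
  a long prefix of the decoded sequence, so the density again tends to the
  indicator of B.  As K is null, B, B - K and B \<union> K have the same densities.
\<close>

abbreviation coins :: "cantor measure" where
  "coins \<equiv> Pi\<^sub>M UNIV (\<lambda>_. measure_pmf (bernoulli_pmf (1/2)))"

definition cyl :: "nat set \<Rightarrow> cantor \<Rightarrow> cantor set" where
  "cyl J z = {y. \<forall>i\<in>J. y i = z i}"

lemma Nbhd_restr: "Nbhd (restr x n) = cyl {..<n} x"
  unfolding Nbhd_def restr_def cyl_def by auto

lemma Nbhd_eq_cyl: "Nbhd s = cyl {..<length s} (\<lambda>i. s ! i)"
  unfolding Nbhd_def cyl_def by auto

lemma in_cyl_self [simp]: "z \<in> cyl J z"
  unfolding cyl_def by auto

lemma cyl_mono: "J \<subseteq> J' \<Longrightarrow> cyl J' z \<subseteq> cyl J z"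
  unfolding cyl_def by auto

lemma length_restr [simp]: "length (restr x n) = n"
  unfolding restr_def by simp

lemma nth_restr [simp]: "i < n \<Longrightarrow> restr x n ! i = x i"
  unfolding restr_def by simp

lemma restr_eq_iff: "restr x n = restr y n \<longleftrightarrow> (\<forall>i<n. x i = y i)"
  unfolding restr_def by (simp add: atLeast0LessThan lessThan_iff Ball_def)

lemma prob_space_mu: "prob_space mu"
  unfolding mu_def
  by (intro prob_space.prob_space_completion prob_space_PiM) (simp add: prob_space_measure_pmf)

interpretation mu: prob_space mu
  by (rule prob_space_mu)

lemma mu_complete: "X \<subseteq> N \<Longrightarrow> N \<in> null_sets mu \<Longrightarrow> X \<in> sets mu"
  unfolding mu_def by (rule completion.complete)

lemma cyl_eq_prod_emb:
  "cyl J z = prod_emb UNIV (\<lambda>_. measure_pmf (bernoulli_pmf (1/2))) J (\<Pi>\<^sub>E i\<in>J. {z i})"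
  unfolding cyl_def prod_emb_def space_PiM by (rule set_eqI) (simp add: restrict_PiE_iff Pi_iff)

lemma sets_coins_cyl: "finite J \<Longrightarrow> cyl J z \<in> sets coins"
  unfolding cyl_eq_prod_emb by (intro sets_PiM_I) auto

lemma sets_mu_cyl: "finite J \<Longrightarrow> cyl J z \<in> sets mu"
  unfolding mu_def by (rule sets_completionI_sets[OF sets_coins_cyl])

lemma measure_cyl:
  assumes "finite J"
  shows "measure mu (cyl J z) = (1/2) ^ card J"
proof -
  have coin: "emeasure (measure_pmf (bernoulli_pmf (1/2))) {b} = ennreal (1/2)" for b
    by (cases b) (simp_all add: emeasure_pmf_single)
  have "emeasure coins (cyl J z) = (\<Prod>i\<in>J. emeasure (measure_pmf (bernoulli_pmf (1/2))) {z i})"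
    unfolding cyl_eq_prod_emb
    by (rule emeasure_PiM_emb) (auto simp: prob_space_measure_pmf assms)
  also have "\<dots> = (\<Prod>i\<in>J. ennreal (1/2))"
    by (simp only: coin)
  also have "\<dots> = ennreal ((1/2) ^ card J)"
    by (subst prod_constant) (rule ennreal_power, simp)
  finally have "measure coins (cyl J z) = enn2real (ennreal ((1/2) ^ card J))"
    by (simp only: measure_def)
  then show ?thesis
    unfolding mu_def by (simp add: measure_completion[OF sets_coins_cyl[OF assms]])
qed

lemma measure_initial_cyl: "measure mu (cyl {..<n} z) = (1/2) ^ n"
  by (simp add: measure_cyl)

lemma open_cyl: "finite J \<Longrightarrow> open (cyl J z)"
proof -
  assume "finite J"
  then have "open {y::cantor. \<forall>i\<in>J. y (id i) \<in> {z i}}"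
    by (intro product_topology_basis') (simp_all add: discrete_topology_class.open_discrete)
  then show ?thesis
    unfolding cyl_def by simp
qed

lemma open_cantor_iff: "open U \<longleftrightarrow> (\<forall>z\<in>U. \<exists>n. cyl {..<n} z \<subseteq> U)"
proof
  assume "open U"
  show "\<forall>z\<in>U. \<exists>n. cyl {..<n} z \<subseteq> U"
  proof
    fix z assume "z \<in> U"
    have "openin (product_topology (\<lambda>i. euclidean) UNIV) U"
      using \<open>open U\<close> unfolding open_fun_def .
    from product_topology_open_contains_basis[OF this \<open>z \<in> U\<close>]
    obtain X where X: "z \<in> (\<Pi>\<^sub>E i\<in>UNIV. X i)" "finite {i. X i \<noteq> UNIV}"
      "(\<Pi>\<^sub>E i\<in>UNIV. X i) \<subseteq> U"
      by auto
    obtain n where n: "{i. X i \<noteq> UNIV} \<subseteq> {..<n}"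
      using X(2) finite_nat_bounded by auto
    have "cyl {..<n} z \<subseteq> (\<Pi>\<^sub>E i\<in>UNIV. X i)"
    proof
      fix y assume "y \<in> cyl {..<n} z"
      have "y i \<in> X i" for i
      proof (cases "i < n")
        case False
        then have "X i = UNIV" using n by blast
        then show ?thesis by simp
      qed (use X(1) \<open>y \<in> cyl {..<n} z\<close> in \<open>auto simp: cyl_def\<close>)
      then show "y \<in> (\<Pi>\<^sub>E i\<in>UNIV. X i)" by (simp add: PiE_UNIV_domain)
    qed
    then show "\<exists>n. cyl {..<n} z \<subseteq> U" using X(3) by blast
  qed
next
  assume nbhd: "\<forall>z\<in>U. \<exists>n. cyl {..<n} z \<subseteq> U"
  have "U = \<Union>{cyl {..<n} z | n z. cyl {..<n} z \<subseteq> U}"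
    using nbhd by (blast intro: in_cyl_self)
  moreover have "open (\<Union>{cyl {..<n} z | n z. cyl {..<n} z \<subseteq> U})"
    by (auto intro: open_cyl)
  ultimately show "open U" by simp
qed

lemma eventually_cyl_subset:
  assumes "open U" "z \<in> U"
  shows "eventually (\<lambda>n. cyl {..<n} z \<subseteq> U) sequentially"
proof -
  obtain n0 where "cyl {..<n0} z \<subseteq> U"
    using assms open_cantor_iff by blast
  then show ?thesis
    unfolding eventually_sequentially
    by (meson cyl_mono lessThan_subset_iff order_trans)
qed

lemma continuous_on_cantor:
  fixes f :: "cantor \<Rightarrow> cantor"
  assumes "\<And>z k. \<exists>n. \<forall>y\<in>cyl {..<n} z. f y k = f z k"
  shows "continuous_on UNIV f"
proof (rule continuous_on_coordinatewise_then_product)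
  fix k
  show "continuous_on UNIV (\<lambda>x. f x k)"
    unfolding continuous_on_open_vimage[OF open_UNIV]
  proof (intro allI impI)
    fix V :: "bool set"
    have "\<exists>n. cyl {..<n} z \<subseteq> (\<lambda>x. f x k) -` V" if "z \<in> (\<lambda>x. f x k) -` V" for z
      using assms[of z k] that by auto
    then show "open ((\<lambda>x. f x k) -` V \<inter> UNIV)"
      unfolding open_cantor_iff by simp
  qed
qed

text \<open>Open sets are countable unions of basic neighbourhoods, hence measurable.\<close>
lemma open_in_sets_mu:
  assumes "open U"
  shows "U \<in> sets mu"
proof -
  have "U = \<Union>(Nbhd ` {s. Nbhd s \<subseteq> U})"
  proof
    show "U \<subseteq> \<Union>(Nbhd ` {s. Nbhd s \<subseteq> U})"
    proof
      fix z assume "z \<in> U"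
      then obtain n where "cyl {..<n} z \<subseteq> U"
        using assms open_cantor_iff by blast
      then show "z \<in> \<Union>(Nbhd ` {s. Nbhd s \<subseteq> U})"
        by (intro UN_I[of "restr z n"]) (auto simp: Nbhd_restr)
    qed
  qed blast
  moreover have "\<Union>(Nbhd ` {s. Nbhd s \<subseteq> U}) \<in> sets mu"
    by (intro sets.countable_Union countable_image countableI_type)
      (auto simp: Nbhd_eq_cyl intro: sets_mu_cyl)
  ultimately show ?thesis by simp
qed

text \<open>The perfect squares are the positions used to code a sequence; the gaps
  between consecutive squares grow, which makes the coding set K null.\<close>

definition sq :: "nat \<Rightarrow> nat" where
  "sq n = n * n"

lemma strict_mono_sq: "strict_mono sq"
  unfolding sq_def by (rule strict_monoI) (simp add: mult_strict_mono)

lemma sq_less_iff [simp]: "sq i < sq j \<longleftrightarrow> i < j"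
  using strict_mono_less[OF strict_mono_sq] .

lemma sq_le_iff [simp]: "sq i \<le> sq j \<longleftrightarrow> i \<le> j"
  using strict_mono_less_eq[OF strict_mono_sq] .

lemma sq_eq_iff [simp]: "sq i = sq j \<longleftrightarrow> i = j"
  using strict_mono_sq strict_mono_eq by blast

lemma le_sq: "n \<le> sq n"
  unfolding sq_def by (simp add: le_square)

lemma between_squares: "sq n < i \<Longrightarrow> i < sq (Suc n) \<Longrightarrow> i \<notin> range sq"
  by auto

text \<open>The number of squares below l.\<close>
definition nsq :: "nat \<Rightarrow> nat" where
  "nsq l = (LEAST j. l \<le> sq j)"

lemma sq_less_iff_nsq: "sq j < l \<longleftrightarrow> j < nsq l"
proof -
  have bound: "l \<le> sq (nsq l)"
    unfolding nsq_def by (rule LeastI[of _ l]) (rule le_sq)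
  show ?thesis
  proof
    assume "sq j < l"
    then have "sq j < sq (nsq l)"
      using bound by linarith
    then show "j < nsq l" by simp
  next
    assume "j < nsq l"
    then have "\<not> l \<le> sq j"
      unfolding nsq_def by (rule not_less_Least)
    then show "sq j < l" by simp
  qed
qed

lemma le_sq_nsq: "l \<le> sq (nsq l)"
  using sq_less_iff_nsq[of "nsq l" l] by simp

lemma nsq_mono:
  assumes "l \<le> l'"
  shows "nsq l \<le> nsq l'"
proof (rule ccontr)
  assume "\<not> nsq l \<le> nsq l'"
  then have "sq (nsq l') < l"
    using sq_less_iff_nsq by simp
  then have "nsq l' < nsq l'"
    using assms sq_less_iff_nsq by (meson less_le_trans)
  then show False by simp
qed

lemma nsq_sq [simp]: "nsq (sq n) = n"
proof -
  have "j < nsq (sq n) \<longleftrightarrow> j < n" for j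
    using sq_less_iff_nsq[of j "sq n"] by simp
  from this[of n] this[of "nsq (sq n)"] show ?thesis
    by linarith
qed

lemma filterlim_nsq: "filterlim nsq at_top sequentially"
  unfolding filterlim_at_top eventually_sequentially
proof
  fix Z
  have "\<forall>l\<ge>sq Z. Z \<le> nsq l"
    using nsq_mono[of "sq Z"] by simp
  then show "\<exists>N. \<forall>l\<ge>N. Z \<le> nsq l" by blast
qed

section \<open>Densities\<close>

lemma density_seq_cyl:
  "density_seq X z n = measure mu (X \<inter> cyl {..<n} z) / (1/2) ^ n"
  unfolding density_seq_def Nbhd_restr measure_initial_cyl ..

lemma density_seq_AE_cong:
  assumes "X \<in> sets mu" "Y \<in> sets mu" "AE y in mu. y \<in> X \<longleftrightarrow> y \<in> Y"
  shows "density_seq X = density_seq Y"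
proof (intro ext)
  fix z n
  have "measure mu (X \<inter> cyl {..<n} z) = measure mu (Y \<inter> cyl {..<n} z)"
    using assms by (intro measure_eq_AE) (auto intro: sets_mu_cyl)
  then show "density_seq X z n = density_seq Y z n"
    by (simp add: density_seq_cyl)
qed

lemma Phi_null_modification:
  assumes "B \<in> sets mu" "K \<in> null_sets mu"
  shows "Phi (B \<union> K) = Phi B" "Phi (B - K) = Phi B"
proof -
  have K: "K \<in> sets mu" using assms(2) by auto
  have "AE y in mu. y \<notin> K"
    using assms(2) by (rule AE_I') auto
  then have "density_seq (B \<union> K) = density_seq B" "density_seq (B - K) = density_seq B"
    using assms(1) K by (auto intro!: density_seq_AE_cong elim: AE_mp)
  then show "Phi (B \<union> K) = Phi B" "Phi (B - K) = Phi B"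
    unfolding Phi_def has_density_def by simp_all
qed

lemma density_seq_close:
  assumes X: "X \<in> sets mu" and R: "R \<in> sets mu" "R \<subseteq> cyl {..<n} z"
    and small: "measure mu R \<le> e * measure mu (cyl {..<n} z)"
    and same: "\<And>y. y \<in> cyl {..<n} z - R \<Longrightarrow> y \<in> X \<longleftrightarrow> z \<in> X"
  shows "\<bar>density_seq X z n - indicator X z\<bar> \<le> e"
proof -
  define N where "N = cyl {..<n} z"
  have N: "N \<in> sets mu" "measure mu N > 0"
    unfolding N_def by (simp_all add: sets_mu_cyl measure_initial_cyl)
  have dens: "density_seq X z n = measure mu (X \<inter> N) / measure mu N"
    unfolding density_seq_def Nbhd_restr N_def ..
  have XN: "measure mu (X \<inter> N) \<le> measure mu N"
    using N X by (intro mu.finite_measure_mono) auto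
  have "0 \<le> e * measure mu N"
    using small measure_nonneg[of mu R] unfolding N_def by linarith
  then have e: "0 \<le> e"
    using N(2) by (simp add: zero_le_mult_iff)
  have lower: "0 \<le> density_seq X z n" and upper: "density_seq X z n \<le> 1"
    unfolding dens using XN N(2) by simp_all
  show ?thesis
  proof (cases "z \<in> X")
    case True
    have "measure mu N - measure mu R = measure mu (N - R)"
      using N R unfolding N_def by (simp add: mu.finite_measure_Diff)
    also have "\<dots> \<le> measure mu (X \<inter> N)"
      using same True N X unfolding N_def by (intro mu.finite_measure_mono) auto
    finally have "(1 - e) * measure mu N \<le> measure mu (X \<inter> N)"
      using small unfolding N_def by (simp add: algebra_simps)
    then have "1 - e \<le> density_seq X z n"
      unfolding dens using N(2) by (simp add: pos_le_divide_eq)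
    then show ?thesis
      using True upper by (simp add: abs_le_iff)
  next
    case False
    have "measure mu (X \<inter> N) \<le> measure mu R"
      using same False R unfolding N_def by (intro mu.finite_measure_mono) auto
    then have "measure mu (X \<inter> N) \<le> e * measure mu N"
      using small unfolding N_def by simp
    then have "density_seq X z n \<le> e"
      unfolding dens using N(2) by (simp add: pos_divide_le_eq)
    then show ?thesis
      using False lower by (simp add: abs_le_iff)
  qed
qed

lemma density_indicator_imp:
  assumes "B \<in> sets mu" and dens: "\<And>z. density_seq B z \<longlonglongrightarrow> indicator B z"
  shows "dualistic B" "Phi B = B"
proof -
  have "has_density B z 1 \<longleftrightarrow> z \<in> B" for z
  proof
    assume "has_density B z 1"
    then have "indicator B z = (1::real)"
      using LIMSEQ_unique[OF dens[of z]] unfolding has_density_def by blast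
    then show "z \<in> B"
      by (cases "z \<in> B") simp_all
  qed (use dens[of z] in \<open>simp add: has_density_def\<close>)
  then show "Phi B = B"
    unfolding Phi_def by auto
  show "dualistic B"
    unfolding dualistic_def has_density_def
    using assms by (metis indicator_simps)
qed

section \<open>Sets that are locally constant off an exceptional set\<close>

definition locally_constant_off :: "cantor set \<Rightarrow> cantor set \<Rightarrow> bool" where
  "locally_constant_off K B \<longleftrightarrow>
     (\<forall>z. z \<notin> K \<longrightarrow> (\<exists>n. \<forall>y\<in>cyl {..<n} z. y \<notin> K \<and> (y \<in> B \<longleftrightarrow> z \<in> B)))"

lemma locally_constant_off_open_closed:
  assumes "locally_constant_off K B"
  shows "open (B - K)" "closed (B \<union> K)"
proof -
  have "\<exists>n. cyl {..<n} z \<subseteq> B - K" if "z \<in> B - K" for z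
    using assms that unfolding locally_constant_off_def by blast
  then show "open (B - K)"
    unfolding open_cantor_iff by blast
  have "\<exists>n. cyl {..<n} z \<subseteq> - (B \<union> K)" if "z \<in> - (B \<union> K)" for z
    using assms that unfolding locally_constant_off_def by blast
  then show "closed (B \<union> K)"
    unfolding closed_def open_cantor_iff by blast
qed

lemma locally_constant_off_density:
  assumes "locally_constant_off K B" "z \<notin> K"
  shows "density_seq B z \<longlonglongrightarrow> indicator B z"
proof (rule tendsto_eventually)
  obtain n0 where n0: "\<And>y. y \<in> cyl {..<n0} z \<Longrightarrow> y \<in> B \<longleftrightarrow> z \<in> B"
    using assms unfolding locally_constant_off_def by blast
  have "density_seq B z n = indicator B z" if "n0 \<le> n" for n
  proof -
    have sub: "cyl {..<n} z \<subseteq> cyl {..<n0} z"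
      using that by (intro cyl_mono) auto
    show ?thesis
    proof (cases "z \<in> B")
      case True
      then have "B \<inter> cyl {..<n} z = cyl {..<n} z"
        using n0 sub by blast
      then show ?thesis
        using True by (simp add: density_seq_cyl measure_initial_cyl)
    next
      case False
      then have "B \<inter> cyl {..<n} z = {}"
        using n0 sub by blast
      then show ?thesis
        using False by (simp add: density_seq_cyl)
    qed
  qed
  then show "eventually (\<lambda>n. density_seq B z n = indicator B z) sequentially"
    unfolding eventually_sequentially by blast
qed

lemma locally_constant_off_sets:
  assumes "K \<in> null_sets mu" "locally_constant_off K B"
  shows "B \<in> sets mu"
proof -
  have "B - K \<in> sets mu" "B \<inter> K \<in> sets mu"
    using locally_constant_off_open_closed(1)[OF assms(2)] assms(1)
    by (auto intro: open_in_sets_mu mu_complete)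
  then show ?thesis
    by (metis Diff_partition Int_Diff_Un sets.Un)
qed

lemma dualistic_closed_open_modifications:
  assumes null: "K \<in> null_sets mu" and lc: "locally_constant_off K B"
    and dens_K: "\<And>z. z \<in> K \<Longrightarrow> density_seq B z \<longlonglongrightarrow> indicator B z"
  shows "dualistic B \<and> closed (B \<union> K) \<and> open (B - K) \<and> B = Phi (B \<union> K) \<and> B = Phi (B - K)"
proof -
  have B: "B \<in> sets mu"
    using null lc by (rule locally_constant_off_sets)
  have dens: "density_seq B z \<longlonglongrightarrow> indicator B z" for z
    using dens_K locally_constant_off_density[OF lc] by blast
  show ?thesis
    using density_indicator_imp[OF B dens] Phi_null_modification[OF B null]
      locally_constant_off_open_closed[OF lc] by simp
qed

section \<open>Selectors for Delta-0-2 sets\<close>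

lemma Delta02_closed_covers:
  assumes "Delta02 A"
  obtains F G :: "nat \<Rightarrow> cantor set"
  where "\<And>i. closed (F i)" "\<And>i. closed (G i)" "(\<Union>i. F i) = A" "(\<Union>i. G i) = - A"
proof -
  have "fsigma_in euclidean A"
    using assms unfolding Delta02_def by blast
  then obtain F :: "nat \<Rightarrow> cantor set" where F: "\<forall>i. closedin euclidean (F i)" "\<Union>(range F) = A"
    unfolding fsigma_in_ascending by blast
  have "fsigma_in euclidean (topspace euclidean - A)"
    using assms unfolding Delta02_def gdelta_in_fsigma_in by blast
  then obtain G :: "nat \<Rightarrow> cantor set"
    where G: "\<forall>i. closedin euclidean (G i)" "\<Union>(range G) = topspace euclidean - A"
    unfolding fsigma_in_ascending by blast
  show ?thesis
  proof (rule that)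
    show "closed (F i)" "closed (G i)" for i
      using F(1) G(1) closed_closedin by blast+
    show "(\<Union>i. F i) = A"
      using F(2) .
    show "(\<Union>i. G i) = - A"
      using G(2) by auto
  qed
qed

text \<open>The selector picks a point of least
  rank, the rank of y being the first stage of the closed covers containing y.\<close>
lemma Delta02_selector:
  assumes "Delta02 A"
  obtains w :: "bool list \<Rightarrow> cantor"
  where "\<And>s. w s \<in> Nbhd s" "\<And>x. eventually (\<lambda>n. w (restr x n) \<in> A \<longleftrightarrow> x \<in> A) sequentially"
proof -
  obtain F G :: "nat \<Rightarrow> cantor set" where closed: "\<And>i. closed (F i)" "\<And>i. closed (G i)"
    and F: "(\<Union>i. F i) = A" and G: "(\<Union>i. G i) = - A"
    using Delta02_closed_covers[OF assms] by blast
  define rank where "rank y = (LEAST i. y \<in> F i \<union> G i)" for y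
  have rank: "y \<in> F (rank y) \<union> G (rank y)" for y
    unfolding rank_def by (rule LeastI_ex) (use F G in blast)
  have rank_le: "y \<in> F i \<union> G i \<Longrightarrow> rank y \<le> i" for y i
    unfolding rank_def by (rule Least_le)
  define w where "w s = (SOME y. y \<in> Nbhd s \<and> (\<forall>y'\<in>Nbhd s. rank y \<le> rank y'))" for s
  have w: "w s \<in> Nbhd s \<and> (\<forall>y'\<in>Nbhd s. rank (w s) \<le> rank y')" for s
  proof -
    have "(\<lambda>i. if i < length s then s ! i else False) \<in> Nbhd s"
      by (simp add: Nbhd_def)
    from ex_has_least_nat[of "\<lambda>y. y \<in> Nbhd s", OF this, of rank]
    obtain y where "y \<in> Nbhd s \<and> (\<forall>y'\<in>Nbhd s. rank y \<le> rank y')"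
      by auto
    then show ?thesis
      unfolding w_def by (rule someI[where x = y])
  qed
  show ?thesis
  proof (rule that)
    show "w s \<in> Nbhd s" for s
      using w by blast
    fix x
    define r where "r = rank x"
    define H where "H = (\<Union>j<r. F j \<union> G j) \<union> (if x \<in> A then G r else F r)"
    have "closed H"
      unfolding H_def using closed by (auto intro!: closed_Un closed_UN)
    moreover have "x \<notin> H"
      using rank_le[of x] F G unfolding H_def r_def by (auto simp: not_le[symmetric])
    ultimately have "eventually (\<lambda>n. cyl {..<n} x \<subseteq> - H) sequentially"
      by (intro eventually_cyl_subset) auto
    then show "eventually (\<lambda>n. w (restr x n) \<in> A \<longleftrightarrow> x \<in> A) sequentially"
    proof eventually_elim
      case (elim n)
      define y where "y = w (restr x n)"
      have "y \<notin> H" "rank y \<le> r"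
        using w[of "restr x n"] elim unfolding y_def r_def Nbhd_restr by auto
      moreover have "\<not> rank y < r"
        using \<open>y \<notin> H\<close> rank[of y] unfolding H_def by auto
      ultimately have "y \<in> (if x \<in> A then F r else G r)"
        using rank[of y] unfolding H_def by (auto split: if_splits)
      then show ?case
        using F G unfolding y_def by (auto split: if_splits)
    qed
  qed
qed

section \<open>Coding by the squares\<close>

text \<open>The sequences vanishing off the squares; a null set carrying an exact
  copy of Cantor space.\<close>
definition K :: "cantor set" where
  "K = {z. \<forall>i. i \<notin> range sq \<longrightarrow> \<not> z i}"

definition dec :: "cantor \<Rightarrow> cantor" where
  "dec z = (\<lambda>n. z (sq n))"

definition enc :: "cantor \<Rightarrow> cantor" where
  "enc x = (\<lambda>i. \<exists>n. sq n = i \<and> x n)"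

text \<open>The
  node omits the last such square, so that points escaping from K near a point
  z at level l (see escape_node) have nodes that are prefixes of dec z.\<close>
definition first_off :: "cantor \<Rightarrow> nat" where
  "first_off z = (LEAST i. i \<notin> range sq \<and> z i)"

definition node :: "cantor \<Rightarrow> bool list" where
  "node z = restr (dec z) (nsq (first_off z) - 1)"

lemma enc_in_K: "enc x \<in> K"
  unfolding K_def enc_def by auto

lemma dec_enc [simp]: "dec (enc x) = x"
  unfolding dec_def enc_def by auto

lemma continuous_enc: "continuous_on UNIV enc"
proof (rule continuous_on_cantor)
  fix z :: cantor and k
  have "enc y k = enc z k" if y: "y \<in> cyl {..<Suc k} z" for y
  proof -
    have "y n = z n" if "sq n = k" for n
      using y le_sq[of n] that unfolding cyl_def by auto
    then show ?thesis
      unfolding enc_def by auto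
  qed
  then show "\<exists>n. \<forall>y\<in>cyl {..<n} z. enc y k = enc z k" by blast
qed

lemma notin_K_iff: "z \<notin> K \<longleftrightarrow> (\<exists>i. i \<notin> range sq \<and> z i)"
  unfolding K_def by blast

lemma first_off:
  assumes "z \<notin> K"
  shows "first_off z \<notin> range sq" "z (first_off z)"
    "\<And>i. i \<notin> range sq \<Longrightarrow> z i \<Longrightarrow> first_off z \<le> i"
  using LeastI_ex[of "\<lambda>i. i \<notin> range sq \<and> z i"] assms Least_le[of "\<lambda>i. i \<notin> range sq \<and> z i"]
  unfolding notin_K_iff first_off_def by auto

lemma node_local:
  assumes "z \<notin> K" "y \<in> cyl {..<Suc (first_off z)} z"
  shows "y \<notin> K" "node y = node z"
proof -
  have agree: "i \<le> first_off z \<Longrightarrow> y i = z i" for i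
    using assms(2) unfolding cyl_def by auto
  show nK: "y \<notin> K"
    using first_off[OF assms(1)] agree notin_K_iff by auto
  have "first_off y \<le> first_off z"
    using first_off[OF assms(1)] agree by (intro first_off(3)[OF nK]) auto
  moreover have "first_off z \<le> first_off y" if "first_off y \<le> first_off z"
    using first_off[OF nK] agree[OF that] by (intro first_off(3)[OF assms(1)]) auto
  ultimately have "first_off y = first_off z"
    by simp
  moreover have "sq j < first_off z \<Longrightarrow> dec y j = dec z j" for j
    unfolding dec_def using agree by simp
  ultimately show "node y = node z"
    unfolding node_def by (simp add: restr_eq_iff sq_less_iff_nsq)
qed

lemma first_off_near_K:
  assumes "z \<in> K" "y \<in> cyl {..<l} z" "y \<notin> K"
  shows "l \<le> first_off y"
proof (rule ccontr)
  assume "\<not> l \<le> first_off y"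
  then have "z (first_off y)"
    using assms(2) first_off(2)[OF assms(3)] unfolding cyl_def by simp
  then show False
    using assms(1) first_off(1)[OF assms(3)] unfolding K_def by blast
qed

text \<open>K is null: between sq m and sq (m + 1) lie 2m non-square positions,
  on all of which the points of K vanish.\<close>
lemma K_null: "K \<in> null_sets mu"
proof -
  have K: "K = (\<Inter>i\<in>- range sq. cyl {i} (\<lambda>_. False))"
    unfolding K_def cyl_def by auto
  have "2 \<notin> range sq"
    by (rule between_squares[of 1]) (simp_all add: sq_def)
  then have sets: "K \<in> sets mu"
    unfolding K by (intro sets.countable_INT) (auto intro: sets_mu_cyl)
  have bound: "measure mu K \<le> (1/2) ^ m" for m
  proof -
    let ?J = "{sq m<..<sq (Suc m)}"
    have "K \<subseteq> cyl ?J (\<lambda>_. False)"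
      using between_squares[of m]
      unfolding K_def cyl_def by auto
    then have "measure mu K \<le> measure mu (cyl ?J (\<lambda>_. False))"
      by (intro mu.finite_measure_mono sets_mu_cyl) simp_all
    also have "\<dots> = (1/2) ^ card ?J"
      by (simp add: measure_cyl)
    also have "card ?J = 2 * m"
      unfolding sq_def by simp
    also have "(1/2::real) ^ (2 * m) \<le> (1/2) ^ m"
      by (rule power_decreasing) auto
    finally show ?thesis .
  qed
  have "measure mu K \<le> 0"
    using bound by (intro LIMSEQ_le_const[OF LIMSEQ_power_zero]) auto
  then show ?thesis
    using sets measure_nonneg[of mu K] by (simp add: mu.emeasure_eq_measure null_sets_def)
qed

text \<open>Points
  of K are approximated at level l up to this cylinder, whose relative measure
  in the neighbourhood of level l is at most 2 ^ - nsq l.\<close>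
definition escape :: "nat \<Rightarrow> nat set" where
  "escape l = {..<sq (Suc (nsq l))} - {sq (nsq l)}"

lemma escape_cyl_subset: "cyl (escape l) z \<subseteq> cyl {..<l} z"
  using le_sq_nsq[of l] unfolding escape_def
  by (intro cyl_mono) (auto simp: sq_def)

lemma measure_escape_cyl:
  "measure mu (cyl (escape l) z) \<le> (1/2) ^ nsq l * measure mu (cyl {..<l} z)"
proof -
  define n where "n = nsq l"
  have "card (escape l) = sq (Suc n) - 1"
    unfolding escape_def n_def[symmetric] by (simp add: card_Diff_singleton)
  moreover have "n + l \<le> sq (Suc n) - 1"
    using le_sq_nsq[of l] unfolding n_def[symmetric] by (simp add: sq_def)
  ultimately have "(1/2::real) ^ card (escape l) \<le> (1/2) ^ (n + l)"
    by (intro power_decreasing) auto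
  then show ?thesis
    unfolding n_def by (simp add: measure_cyl escape_def measure_initial_cyl power_add)
qed

text \<open>A point y close to a point z of K at level l which leaves the escape
  cylinder has a 1 at a non-square position between l and the next square
  block.\<close>
lemma escape_node:
  assumes zK: "z \<in> K" and y: "y \<in> cyl {..<l} z - cyl (escape l) z"
  shows "y \<notin> K" "\<exists>m. nsq l - 1 \<le> m \<and> node y = restr (dec z) m"
proof -
  define n where "n = nsq l"
  from y obtain i where i: "i \<in> escape l" "y i \<noteq> z i"
    unfolding cyl_def by auto
  have agree: "j < l \<Longrightarrow> y j = z j" for j
    using y unfolding cyl_def by auto
  have "l \<le> i"
    using agree i(2) not_le by blast
  moreover have iL: "i < sq (Suc n)" "i \<noteq> sq n"
    using i(1) unfolding escape_def n_def by auto
  ultimately have nonsq: "i \<notin> range sq"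
    using sq_less_iff_nsq unfolding n_def
    by (metis leD less_Suc_eq rangeE sq_less_iff)
  then have "y i"
    using zK i(2) unfolding K_def by auto
  then show nK: "y \<notin> K"
    using nonsq notin_K_iff by blast
  have "first_off y \<le> i"
    using first_off(3)[OF nK nonsq \<open>y i\<close>] .
  have "l \<le> first_off y"
    using first_off_near_K[OF zK _ nK] y by blast
  define m where "m = nsq (first_off y) - 1"
  have "n \<le> nsq (first_off y)" "nsq (first_off y) \<le> Suc n"
    using nsq_mono[OF \<open>l \<le> first_off y\<close>] nsq_mono[of "first_off y" "sq (Suc n)"]
      \<open>first_off y \<le> i\<close> iL(1) unfolding n_def by auto
  then have "n - 1 \<le> m" "m \<le> n"
    unfolding m_def by auto
  have "dec y j = dec z j" if "j < m" for j
  proof -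
    have "sq j < l"
      using that \<open>m \<le> n\<close> sq_less_iff_nsq unfolding n_def by simp
    then show ?thesis
      unfolding dec_def using agree by simp
  qed
  then have "node y = restr (dec z) m"
    unfolding node_def m_def[symmetric] by (simp add: restr_eq_iff)
  then show "\<exists>m. nsq l - 1 \<le> m \<and> node y = restr (dec z) m"
    using \<open>n - 1 \<le> m\<close> unfolding n_def by blast
qed

locale selector =
  fixes A :: "cantor set" and w :: "bool list \<Rightarrow> cantor"
  assumes w_Nbhd: "w s \<in> Nbhd s"
    and w_converges: "eventually (\<lambda>n. w (restr x n) \<in> A \<longleftrightarrow> x \<in> A) sequentially"
begin

definition g :: "cantor \<Rightarrow> cantor" where
  "g z = (if z \<in> K then dec z else w (node z))"

definition B :: "cantor set" where
  "B = g -` A"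

lemma B_on_K: "z \<in> K \<Longrightarrow> z \<in> B \<longleftrightarrow> dec z \<in> A"
  unfolding B_def g_def by simp

lemma B_off_K: "z \<notin> K \<Longrightarrow> z \<in> B \<longleftrightarrow> w (node z) \<in> A"
  unfolding B_def g_def by simp

text \<open>Off K, g is locally constant.  Near a point z of K, coordinate k of g
  is z (sq k): nearby points off K have long nodes, and the selected point lies
  in the neighbourhood of the node.\<close>
lemma continuous_g: "continuous_on UNIV g"
proof (rule continuous_on_cantor)
  fix z k
  show "\<exists>n. \<forall>y\<in>cyl {..<n} z. g y k = g z k"
  proof (cases "z \<in> K")
    case False
    then show ?thesis
      using node_local[OF False] unfolding g_def by metis
  next
    case zK: True
    have "g y k = g z k" if y: "y \<in> cyl {..<Suc (sq (Suc k))} z" for y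
    proof -
      have "sq k \<in> {..<Suc (sq (Suc k))}"
        by (simp add: less_Suc_eq_le)
      then have agree_k: "y (sq k) = z (sq k)"
        using y unfolding cyl_def by blast
      show ?thesis
      proof (cases "y \<in> K")
        case True
        then show ?thesis
          using zK agree_k unfolding g_def dec_def by simp
      next
        case nK: False
        have "Suc (sq (Suc k)) \<le> first_off y"
          using zK y nK by (rule first_off_near_K)
        then have "sq (Suc k) < first_off y"
          by simp
        then have "Suc k < nsq (first_off y)"
          by (simp only: sq_less_iff_nsq)
        then have "k < nsq (first_off y) - 1"
          by simp
        then have "w (node y) k = y (sq k)"
          using w_Nbhd[of "node y"] unfolding Nbhd_def node_def dec_def by simp
        then show ?thesis
          using nK zK agree_k unfolding g_def dec_def by simp
      qed
    qed
    then show ?thesis by blast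
  qed
qed

lemma wadge_eq_B: "wadge_eq B A"
proof -
  have "A = enc -` B"
    using B_on_K[OF enc_in_K] by auto
  then show ?thesis
    unfolding wadge_eq_def wadge_le_def B_def
    using continuous_g continuous_enc by blast
qed

lemma locally_constant_B: "locally_constant_off K B"
  unfolding locally_constant_off_def using node_local B_off_K by metis

text \<open>At a point z of K the escaping points of a neighbourhood of level l are
  decided by a prefix of dec z of length at least nsq l - 1, hence all agree
  with z once this exceeds the convergence threshold of the selector along
  dec z; the remaining points have relative measure at most 2 ^ - nsq l.\<close>
lemma density_on_K:
  assumes zK: "z \<in> K"
  shows "density_seq B z \<longlonglongrightarrow> indicator B z"
proof -
  obtain N0 where N0: "\<And>m. N0 \<le> m \<Longrightarrow> w (restr (dec z) m) \<in> A \<longleftrightarrow> dec z \<in> A"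
    using w_converges[of "dec z"] unfolding eventually_sequentially by blast
  have close: "\<bar>density_seq B z l - indicator B z\<bar> \<le> (1/2) ^ nsq l"
    if l: "Suc N0 \<le> nsq l" for l
  proof (rule density_seq_close)
    show "B \<in> sets mu"
      using K_null locally_constant_B by (rule locally_constant_off_sets)
    show "cyl (escape l) z \<in> sets mu"
      by (simp add: escape_def sets_mu_cyl)
    show "cyl (escape l) z \<subseteq> cyl {..<l} z"
      by (rule escape_cyl_subset)
    show "measure mu (cyl (escape l) z) \<le> (1/2) ^ nsq l * measure mu (cyl {..<l} z)"
      by (rule measure_escape_cyl)
    fix y assume y: "y \<in> cyl {..<l} z - cyl (escape l) z"
    obtain m where "nsq l - 1 \<le> m" "node y = restr (dec z) m"
      using escape_node(2)[OF zK y] by blast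
    then show "y \<in> B \<longleftrightarrow> z \<in> B"
      using B_off_K[OF escape_node(1)[OF zK y]] B_on_K[OF zK] N0 l by simp
  qed
  have "eventually (\<lambda>l. Suc N0 \<le> nsq l) sequentially"
    using filterlim_nsq by (simp add: filterlim_at_top)
  then have "eventually (\<lambda>l. norm (density_seq B z l - indicator B z) \<le> (1/2) ^ nsq l) sequentially"
    by eventually_elim (use close in simp)
  moreover have "(\<lambda>l. (1/2::real) ^ nsq l) \<longlonglongrightarrow> 0"
    using filterlim_compose[OF LIMSEQ_power_zero[of "1/2::real"] filterlim_nsq] by simp
  ultimately have "(\<lambda>l. density_seq B z l - indicator B z) \<longlonglongrightarrow> 0"
    by (rule Lim_null_comparison)
  then show ?thesis
    by (rule LIM_zero_cancel)
qed

end

theorem theorem5p3: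
  fixes A :: "cantor set"
  assumes "Delta02 A"
  shows "\<exists>B C U. wadge_eq B A \<and> dualistic B \<and> closed C \<and> open U \<and>
           B = Phi C \<and> B = Phi U"
proof -
  obtain w where "selector A w"
    using Delta02_selector[OF assms] by (metis selector.intro)
  then interpret selector A w .
  have "dualistic B \<and> closed (B \<union> K) \<and> open (B - K) \<and> B = Phi (B \<union> K) \<and> B = Phi (B - K)"
    using K_null locally_constant_B density_on_K by (rule dualistic_closed_open_modifications)
  then show ?thesis
    using wadge_eq_B by blast
qed

end
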